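(* Let $I$ be an ideal of a multiplicative Lie algebra $G$. Then $\dfrac{G}{I}\otimes\dfrac{G}{I}\cong\dfrac{G\otimes G}{(I\otimes G)(G\otimes I)}$.
   Context: A multiplicative Lie algebra is a group $(G,\cdot)$ with a binary operation $\star$ such that for all $x,y,z\in G$: $x\star x=1$; $x\star(yz)=(x\star y)\,{}^y(x\star z)$; $(xy)\star z={}^x(y\star z)(x\star z)$; $((x\star y)\star{}^yz)((y\star z)\star{}^zx)((z\star x)\star{}^xy)=1$; ${}^z(x\star y)={}^zx\star{}^zy$, where ${}^xy=xyx^{-1}$. An ideal is a normal subgroup $I$ with $x\star y\in I$ for all $x\in G,y\in I$. The tensor square $G\otimes G$ is the multiplicative Lie algebra generated by symbols $x\otimes y$ ($x,y\in G$) subject to, for all $x,x',y,y'\in G$: $x\otimes(yy')=(x\otimes y)({}^yx\otimes{}^yy')$; $(xx')\otimes y=({}^xx'\otimes{}^xy)(x\otimes y)$; $((x\star x')\otimes{}^{x'}y)({}^yx\otimes(x'\star y))^{-1}({}^xx'\otimes(x\star y)^{-1})^{-1}=1$; $({}^{y'}x\otimes(y\star y'))((y\star x)^{-1}\otimes{}^yy')^{-1}((y'\star x)\otimes{}^xy)^{-1}=1$; and $(x\otimes y)\star(x'\otimes y')=(y\star x)^{-1}\otimes(x'\star y')$. $I\otimes G$ (resp. $G\otimes I$) is the subgroup of $G\otimes G$ generated by all $a\otimes b$ with $a\in I,b\in G$ (resp. $a\in G,b\in I$). *)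

theory Defs
  imports "HOL-Algebra.Algebra"
begin

record 'a mla = "'a monoid" + star :: "'a \<Rightarrow> 'a \<Rightarrow> 'a"

definition conjg :: "('a, 'b) mla_scheme \<Rightarrow> 'a \<Rightarrow> 'a \<Rightarrow> 'a" where
  "conjg G x y = x \<otimes>\<^bsub>G\<^esub> y \<otimes>\<^bsub>G\<^esub> inv\<^bsub>G\<^esub> x"

definition mult_lie_alg :: "('a, 'b) mla_scheme \<Rightarrow> bool" where
  "mult_lie_alg G \<longleftrightarrow> group G
   \<and> (\<forall>x\<in>carrier G. \<forall>y\<in>carrier G. star G x y \<in> carrier G)
   \<and> (\<forall>x\<in>carrier G. star G x x = \<one>\<^bsub>G\<^esub>)
   \<and> (\<forall>x\<in>carrier G. \<forall>y\<in>carrier G. \<forall>z\<in>carrier G.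
        star G x (y \<otimes>\<^bsub>G\<^esub> z) = star G x y \<otimes>\<^bsub>G\<^esub> conjg G y (star G x z))
   \<and> (\<forall>x\<in>carrier G. \<forall>y\<in>carrier G. \<forall>z\<in>carrier G.
        star G (x \<otimes>\<^bsub>G\<^esub> y) z = conjg G x (star G y z) \<otimes>\<^bsub>G\<^esub> star G x z)
   \<and> (\<forall>x\<in>carrier G. \<forall>y\<in>carrier G. \<forall>z\<in>carrier G.
        star G (star G x y) (conjg G y z) \<otimes>\<^bsub>G\<^esub> star G (star G y z) (conjg G z x)
          \<otimes>\<^bsub>G\<^esub> star G (star G z x) (conjg G x y) = \<one>\<^bsub>G\<^esub>)
   \<and> (\<forall>x\<in>carrier G. \<forall>y\<in>carrier G. \<forall>z\<in>carrier G.
        conjg G z (star G x y) = star G (conjg G z x) (conjg G z y))"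

definition mla_ideal :: "'a set \<Rightarrow> ('a, 'b) mla_scheme \<Rightarrow> bool" where
  "mla_ideal I G \<longleftrightarrow> normal I G \<and> (\<forall>x\<in>carrier G. \<forall>y\<in>I. star G x y \<in> I)"

definition mla_hom :: "('a, 'c) mla_scheme \<Rightarrow> ('b, 'd) mla_scheme \<Rightarrow> ('a \<Rightarrow> 'b) set" where
  "mla_hom G H = {h. h \<in> hom G H \<and>
     (\<forall>x\<in>carrier G. \<forall>y\<in>carrier G. h (star G x y) = star H (h x) (h y))}"

definition mla_iso :: "('a, 'c) mla_scheme \<Rightarrow> ('b, 'd) mla_scheme \<Rightarrow> ('a \<Rightarrow> 'b) set" where
  "mla_iso G H = {h. h \<in> mla_hom G H \<and> bij_betw h (carrier G) (carrier H)}"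

definition mla_is_iso :: "('a, 'c) mla_scheme \<Rightarrow> ('b, 'd) mla_scheme \<Rightarrow> bool" where
  "mla_is_iso G H \<longleftrightarrow> mla_iso G H \<noteq> {}"

text \<open>Quotient G/I by an ideal: the quotient group (right cosets, as in HOL-Algebra's
  G Mod I) with star induced from representatives (well defined for ideals).\<close>

definition MLA_Mod :: "('a, 'b) mla_scheme \<Rightarrow> 'a set \<Rightarrow> 'a set mla" where
  "MLA_Mod G I = \<lparr> partial_object.carrier = rcosets\<^bsub>G\<^esub> I, monoid.mult = set_mult G, monoid.one = I,
     star = (\<lambda>A B. I #>\<^bsub>G\<^esub> star G (SOME a. a \<in> A) (SOME b. b \<in> B)) \<rparr>"

datatype 'g mterm = Gen 'g | One | Mul "'g mterm" "'g mterm" | Inv "'g mterm"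
  | Star "'g mterm" "'g mterm"

definition cjT :: "'g mterm \<Rightarrow> 'g mterm \<Rightarrow> 'g mterm" where
  "cjT x y = Mul (Mul x y) (Inv x)"

fun wf_mterm :: "'a set \<Rightarrow> ('a \<times> 'a) mterm \<Rightarrow> bool" where
  "wf_mterm A (Gen (x, y)) = (x \<in> A \<and> y \<in> A)"
| "wf_mterm A One = True"
| "wf_mterm A (Mul s t) = (wf_mterm A s \<and> wf_mterm A t)"
| "wf_mterm A (Inv s) = wf_mterm A s"
| "wf_mterm A (Star s t) = (wf_mterm A s \<and> wf_mterm A t)"

inductive_set tens_rel :: "('a, 'b) mla_scheme \<Rightarrow> (('a \<times> 'a) mterm \<times> ('a \<times> 'a) mterm) set"
  for G :: "('a, 'b) mla_scheme" where
  refl: "(s, s) \<in> tens_rel G"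
| sym: "(s, t) \<in> tens_rel G \<Longrightarrow> (t, s) \<in> tens_rel G"
| trans: "(s, t) \<in> tens_rel G \<Longrightarrow> (t, u) \<in> tens_rel G \<Longrightarrow> (s, u) \<in> tens_rel G"
| cong_mul: "(s, s') \<in> tens_rel G \<Longrightarrow> (t, t') \<in> tens_rel G \<Longrightarrow> (Mul s t, Mul s' t') \<in> tens_rel G"
| cong_inv: "(s, s') \<in> tens_rel G \<Longrightarrow> (Inv s, Inv s') \<in> tens_rel G"
| cong_star: "(s, s') \<in> tens_rel G \<Longrightarrow> (t, t') \<in> tens_rel G \<Longrightarrow> (Star s t, Star s' t') \<in> tens_rel G"
| assoc: "(Mul (Mul s t) u, Mul s (Mul t u)) \<in> tens_rel G"
| lunit: "(Mul One s, s) \<in> tens_rel G"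
| runit: "(Mul s One, s) \<in> tens_rel G"
| linv: "(Mul (Inv s) s, One) \<in> tens_rel G"
| star_self: "(Star s s, One) \<in> tens_rel G"
| star_mul_right: "(Star x (Mul y z), Mul (Star x y) (cjT y (Star x z))) \<in> tens_rel G"
| star_mul_left: "(Star (Mul x y) z, Mul (cjT x (Star y z)) (Star x z)) \<in> tens_rel G"
| jacobi: "(Mul (Mul (Star (Star x y) (cjT y z)) (Star (Star y z) (cjT z x)))
             (Star (Star z x) (cjT x y)), One) \<in> tens_rel G"
| star_conj: "(cjT z (Star x y), Star (cjT z x) (cjT z y)) \<in> tens_rel G"
| rel1: "\<lbrakk>x \<in> carrier G; y \<in> carrier G; y' \<in> carrier G\<rbrakk> \<Longrightarrow>
    (Gen (x, y \<otimes>\<^bsub>G\<^esub> y'), Mul (Gen (x, y)) (Gen (conjg G y x, conjg G y y'))) \<in> tens_rel G"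
| rel2: "\<lbrakk>x \<in> carrier G; x' \<in> carrier G; y \<in> carrier G\<rbrakk> \<Longrightarrow>
    (Gen (x \<otimes>\<^bsub>G\<^esub> x', y), Mul (Gen (conjg G x x', conjg G x y)) (Gen (x, y))) \<in> tens_rel G"
| rel3: "\<lbrakk>x \<in> carrier G; x' \<in> carrier G; y \<in> carrier G\<rbrakk> \<Longrightarrow>
    (Mul (Mul (Gen (star G x x', conjg G x' y)) (Inv (Gen (conjg G y x, star G x' y))))
         (Inv (Gen (conjg G x x', inv\<^bsub>G\<^esub> (star G x y)))), One) \<in> tens_rel G"
| rel4: "\<lbrakk>x \<in> carrier G; y \<in> carrier G; y' \<in> carrier G\<rbrakk> \<Longrightarrow>
    (Mul (Mul (Gen (conjg G y' x, star G y y')) (Inv (Gen (inv\<^bsub>G\<^esub> (star G y x), conjg G y y'))))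
         (Inv (Gen (star G y' x, conjg G x y))), One) \<in> tens_rel G"
| rel5: "\<lbrakk>x \<in> carrier G; y \<in> carrier G; x' \<in> carrier G; y' \<in> carrier G\<rbrakk> \<Longrightarrow>
    (Star (Gen (x, y)) (Gen (x', y')), Gen (inv\<^bsub>G\<^esub> (star G y x), star G x' y')) \<in> tens_rel G"

definition tensor_sq :: "('a, 'b) mla_scheme \<Rightarrow> ('a \<times> 'a) mterm set mla" where
  "tensor_sq G = \<lparr> partial_object.carrier = {tens_rel G `` {t} | t. wf_mterm (carrier G) t},
     monoid.mult = (\<lambda>P Q. \<Union>s\<in>P. \<Union>t\<in>Q. (tens_rel G `` {Mul s t})),
     monoid.one = tens_rel G `` {One},
     star = (\<lambda>P Q. \<Union>s\<in>P. \<Union>t\<in>Q. (tens_rel G `` {Star s t})) \<rparr>"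

definition tens :: "('a, 'b) mla_scheme \<Rightarrow> 'a \<Rightarrow> 'a \<Rightarrow> ('a \<times> 'a) mterm set" where
  "tens G x y = tens_rel G `` {Gen (x, y)}"

definition left_tens :: "'a set \<Rightarrow> ('a, 'b) mla_scheme \<Rightarrow> ('a \<times> 'a) mterm set set" where
  "left_tens I G = generate (tensor_sq G) {tens G a b | a b. a \<in> I \<and> b \<in> carrier G}"

definition right_tens :: "('a, 'b) mla_scheme \<Rightarrow> 'a set \<Rightarrow> ('a \<times> 'a) mterm set set" where
  "right_tens G I = generate (tensor_sq G) {tens G a b | a b. a \<in> carrier G \<and> b \<in> I}"

end

theory Submission
  imports Defs
begin

(*
  Write N = (I \<otimes> G)(G \<otimes> I).  The quotient map G \<rightarrow> G/I induces a homomorphism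
  \<psi> : G \<otimes> G \<rightarrow> G/I \<otimes> G/I, x \<otimes> y \<mapsto> Ix \<otimes> Iy, which is onto and kills N because
  1 \<otimes> y = x \<otimes> 1 = 1.  Conversely (Ix, Iy) \<mapsto> N(x \<otimes> y) is well defined and satisfies the
  defining relations of G/I \<otimes> G/I, so the universal property of the presentation gives
  \<phi> : G/I \<otimes> G/I \<rightarrow> (G \<otimes> G)/N.  As \<phi> \<circ> \<psi> is the quotient map and \<psi> is onto, \<phi> is
  bijective.  N is normal because conjugation by x \<otimes> y acts on tensors through
  conjugation by [x, y] in G, and it is an ideal by the relation
  (x \<otimes> y) \<star> (a \<otimes> b) = (y \<star> x)\<inverse> \<otimes> (a \<star> b).
*)

section \<open>Groups\<close>

lemma (in group) inv_mult_cancel_left [simp]: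
  "\<lbrakk>x \<in> carrier G; y \<in> carrier G\<rbrakk> \<Longrightarrow> inv x \<otimes> (x \<otimes> y) = y"
  by (simp add: m_assoc[symmetric])

lemma (in group) rcos_mult_left_absorb:
  assumes N: "subgroup N G" and n: "n \<in> N" and x: "x \<in> carrier G"
  shows "N #> (n \<otimes> x) = N #> x"
proof -
  have "N #> (n \<otimes> x) = (N #> n) #> x"
    using coset_mult_assoc[OF subgroup.subset[OF N] subgroup.mem_carrier[OF N n] x] by simp
  then show ?thesis using subgroup.rcos_const[OF N is_group n] by simp
qed

lemma (in group) rcos_mult_right_absorb:
  assumes "N \<lhd> G" "n \<in> N" "x \<in> carrier G"
  shows "N #> (x \<otimes> n) = N #> x"
proof -
  have "n \<in> carrier G"
    using subgroup.mem_carrier[OF normal_imp_subgroup[OF assms(1)] assms(2)] .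
  then have eq: "(x \<otimes> n \<otimes> inv x) \<otimes> x = x \<otimes> n"
    using assms(3) by (simp add: m_assoc)
  have "x \<otimes> n \<otimes> inv x \<in> N" using assms(1)[unfolded normal_inv_iff] assms(2,3) by blast
  then have "N #> ((x \<otimes> n \<otimes> inv x) \<otimes> x) = N #> x"
    by (rule rcos_mult_left_absorb[OF normal_imp_subgroup[OF assms(1)] _ assms(3)])
  then show ?thesis by (simp only: eq)
qed

lemma (in group) rcos_some:
  assumes "subgroup N G" "x \<in> carrier G"
  shows "(SOME a. a \<in> N #> x) \<in> carrier G" "N #> (SOME a. a \<in> N #> x) = N #> x"
proof -
  have some: "(SOME a. a \<in> N #> x) \<in> N #> x" using rcos_self[OF assms(2,1)] by (rule someI)
  show "(SOME a. a \<in> N #> x) \<in> carrier G"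
    by (rule subgroup.elemrcos_carrier[OF assms(1) is_group assms(2) some])
  show "N #> (SOME a. a \<in> N #> x) = N #> x"
    by (rule repr_independence[OF some assms(2,1), symmetric])
qed

lemma (in group) rcos_eq_obtain_right:
  assumes "N \<lhd> G" "a \<in> carrier G" "a' \<in> carrier G" "N #> a = N #> a'"
  obtains j where "j \<in> N" "a = a' \<otimes> j"
proof -
  have "a \<in> a' <# N"
    using assms rcos_self[OF assms(2) normal_imp_subgroup[OF assms(1)]] normal.coset_eq[OF assms(1)]
    by simp
  then show ?thesis using that unfolding l_coset_def by blast
qed

lemma (in group) normal_generate_by_generators:
  assumes S: "S \<subseteq> carrier G" and A: "A \<subseteq> carrier G" and gen: "carrier G \<subseteq> generate G A"
    and conj: "\<And>a s. a \<in> A \<Longrightarrow> s \<in> S \<Longrightarrow> a \<otimes> s \<otimes> inv a \<in> S"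
    and conj_inv: "\<And>a s. a \<in> A \<Longrightarrow> s \<in> S \<Longrightarrow> inv a \<otimes> s \<otimes> a \<in> S"
  shows "generate G S \<lhd> G"
proof -
  have "\<forall>s\<in>S. g \<otimes> s \<otimes> inv g \<in> S" if "g \<in> generate G A" for g
    using that
  proof (induction g rule: generate.induct)
    case one
    then show ?case using S by auto
  next
    case (incl x)
    then show ?case using conj by blast
  next
    case (inv x)
    then show ?case using conj_inv A by auto
  next
    case (eng g h)
    have "g \<in> carrier G" "h \<in> carrier G"
      using eng.hyps generate_in_carrier[OF A] by auto
    then have "g \<otimes> h \<otimes> s \<otimes> inv (g \<otimes> h) = g \<otimes> (h \<otimes> s \<otimes> inv h) \<otimes> inv g"
      if "s \<in> S" for s
      using that S by (auto simp: m_assoc inv_mult_group)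
    then show ?case using eng.IH by auto
  qed
  then show ?thesis
    using gen by (intro normal_generateI[OF S]) (auto intro: generate.incl)
qed

lemma (in group) hom_eq_on_generate:
  assumes "h \<in> hom G H" "h' \<in> hom G H" "group H" "S \<subseteq> carrier G"
    and "\<And>s. s \<in> S \<Longrightarrow> h s = h' s" and "x \<in> generate G S"
  shows "h x = h' x"
proof -
  interpret h: group_hom G H h by (intro group_hom.intro group_hom_axioms.intro is_group assms(1,3))
  interpret h': group_hom G H h' by (intro group_hom.intro group_hom_axioms.intro is_group assms(2,3))
  show ?thesis
    using assms(6)
  proof (induction x rule: generate.induct)
    case (incl s)
    then show ?case by (rule assms(5))
  next
    case (inv s)
    then show ?case using assms(4,5) by auto
  next
    case (eng x y)
    then show ?case using generate_in_carrier[OF assms(4)] by simp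
  qed simp
qed

section \<open>Multiplicative Lie algebras\<close>

locale mla = group G for G :: "('a, 'b) mla_scheme" (structure) +
  assumes star_closed [intro, simp]: "\<lbrakk>x \<in> carrier G; y \<in> carrier G\<rbrakk> \<Longrightarrow> star G x y \<in> carrier G"
    and star_self: "x \<in> carrier G \<Longrightarrow> star G x x = \<one>"
    and star_mult_right: "\<lbrakk>x \<in> carrier G; y \<in> carrier G; z \<in> carrier G\<rbrakk> \<Longrightarrow>
      star G x (y \<otimes> z) = star G x y \<otimes> conjg G y (star G x z)"
    and star_mult_left: "\<lbrakk>x \<in> carrier G; y \<in> carrier G; z \<in> carrier G\<rbrakk> \<Longrightarrow>
      star G (x \<otimes> y) z = conjg G x (star G y z) \<otimes> star G x z"
    and star_jacobi: "\<lbrakk>x \<in> carrier G; y \<in> carrier G; z \<in> carrier G\<rbrakk> \<Longrightarrow>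
      star G (star G x y) (conjg G y z) \<otimes> star G (star G y z) (conjg G z x)
        \<otimes> star G (star G z x) (conjg G x y) = \<one>"
    and conjg_star: "\<lbrakk>x \<in> carrier G; y \<in> carrier G; z \<in> carrier G\<rbrakk> \<Longrightarrow>
      conjg G z (star G x y) = star G (conjg G z x) (conjg G z y)"

lemma mult_lie_alg_iff_mla: "mult_lie_alg G \<longleftrightarrow> mla G"
  unfolding mult_lie_alg_def mla_def mla_axioms_def by (simp add: Ball_def)

lemma mla_ideal_normal: "mla_ideal N G \<Longrightarrow> N \<lhd> G"
  by (simp add: mla_ideal_def)

lemma mla_ideal_subgroup: "mla_ideal N G \<Longrightarrow> subgroup N G"
  by (simp add: mla_ideal_def normal_imp_subgroup)

lemma MLA_Mod_carrier: "carrier (MLA_Mod G N) = rcosets\<^bsub>G\<^esub> N"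
  by (simp add: MLA_Mod_def)

lemma MLA_Mod_one: "\<one>\<^bsub>MLA_Mod G N\<^esub> = N"
  by (simp add: MLA_Mod_def)

context mla begin

lemma conjg_closed [intro, simp]: "\<lbrakk>x \<in> carrier G; y \<in> carrier G\<rbrakk> \<Longrightarrow> conjg G x y \<in> carrier G"
  by (simp add: conjg_def)

lemma conjg_one_left [simp]: "x \<in> carrier G \<Longrightarrow> conjg G \<one> x = x"
  by (simp add: conjg_def)

lemma conjg_one_right [simp]: "x \<in> carrier G \<Longrightarrow> conjg G x \<one> = \<one>"
  by (simp add: conjg_def)

lemma conjg_mult:
  "\<lbrakk>x \<in> carrier G; a \<in> carrier G; b \<in> carrier G\<rbrakk> \<Longrightarrow> conjg G x (a \<otimes> b) = conjg G x a \<otimes> conjg G x b"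
  by (simp add: conjg_def m_assoc)

lemma conjg_inv:
  "\<lbrakk>x \<in> carrier G; a \<in> carrier G\<rbrakk> \<Longrightarrow> conjg G x (inv a) = inv (conjg G x a)"
  by (simp add: conjg_def m_assoc inv_mult_group)

lemma conjg_conjg_mult:
  "\<lbrakk>x \<in> carrier G; y \<in> carrier G; a \<in> carrier G\<rbrakk> \<Longrightarrow> conjg G x (conjg G y a) = conjg G (x \<otimes> y) a"
  by (simp add: conjg_def m_assoc inv_mult_group)

lemma conjg_inv_cancel [simp]:
  "\<lbrakk>x \<in> carrier G; a \<in> carrier G\<rbrakk> \<Longrightarrow> conjg G (inv x) (conjg G x a) = a"
  "\<lbrakk>x \<in> carrier G; a \<in> carrier G\<rbrakk> \<Longrightarrow> conjg G x (conjg G (inv x) a) = a"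
  by (simp_all add: conjg_conjg_mult)

lemma conjg_conjg:
  assumes "x \<in> carrier G" "y \<in> carrier G" "a \<in> carrier G"
  shows "conjg G (conjg G x y) (conjg G x a) = conjg G (x \<otimes> y) a"
proof -
  have "conjg G (conjg G x y) (conjg G x a) = conjg G x (y \<otimes> a \<otimes> inv y)"
    using assms by (simp add: conjg_def[of G "conjg G x y"] conjg_mult conjg_inv)
  also have "\<dots> = conjg G (x \<otimes> y) a"
    using assms by (simp add: conjg_conjg_mult[symmetric]) (simp add: conjg_def)
  finally show ?thesis .
qed

lemma normal_conjg: "\<lbrakk>N \<lhd> G; x \<in> carrier G; n \<in> N\<rbrakk> \<Longrightarrow> conjg G x n \<in> N"
  by (simp add: conjg_def normal_inv_iff)

lemma star_one_left [simp]: "x \<in> carrier G \<Longrightarrow> star G \<one> x = \<one>"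
  using star_mult_left[of \<one> \<one> x] by simp

lemma star_one_right [simp]: "x \<in> carrier G \<Longrightarrow> star G x \<one> = \<one>"
  using star_mult_right[of x \<one> \<one>] by simp

lemma star_inv_left:
  assumes "x \<in> carrier G" "y \<in> carrier G"
  shows "star G (inv x) y = inv (conjg G (inv x) (star G x y))"
proof -
  have "conjg G (inv x) (star G x y) \<otimes> star G (inv x) y = star G (inv x \<otimes> x) y"
    using assms by (intro star_mult_left[symmetric]) auto
  also have "\<dots> = \<one>" using assms by simp
  finally have "star G (inv x) y \<otimes> conjg G (inv x) (star G x y) = \<one>"
    by (rule inv_comm) (use assms in auto)
  then have "inv (conjg G (inv x) (star G x y)) = star G (inv x) y"
    by (rule inv_equality) (use assms in auto)
  then show ?thesis by simp
qed

lemma star_inv_right: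
  assumes "x \<in> carrier G" "y \<in> carrier G"
  shows "star G x (inv y) = conjg G (inv y) (inv (star G x y))"
proof -
  have "star G x y \<otimes> conjg G y (star G x (inv y)) = star G x (y \<otimes> inv y)"
    using assms by (intro star_mult_right[symmetric]) auto
  also have "\<dots> = \<one>" using assms by simp
  finally have "conjg G y (star G x (inv y)) \<otimes> star G x y = \<one>"
    by (rule inv_comm) (use assms in auto)
  then have "inv (star G x y) = conjg G y (star G x (inv y))"
    by (rule inv_equality) (use assms in auto)
  then have "conjg G (inv y) (inv (star G x y)) = star G x (inv y)"
    using assms by simp
  then show ?thesis by simp
qed

lemma star_swap:
  assumes x: "x \<in> carrier G" and y: "y \<in> carrier G"
  shows "star G y x = inv (star G x y)"
proof -
  have "conjg G x (star G y x \<otimes> star G x y) = conjg G x (star G y x) \<otimes> conjg G x (star G x y)"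
    using assms by (simp add: conjg_mult)
  also have "\<dots> = conjg G x (star G y (x \<otimes> y)) \<otimes> star G x (x \<otimes> y)"
    using assms by (simp add: star_mult_right star_self)
  also have "\<dots> = star G (x \<otimes> y) (x \<otimes> y)"
    using assms by (intro star_mult_left[symmetric]) auto
  also have "\<dots> = \<one>" using assms by (simp add: star_self)
  finally have conj_one: "conjg G x (star G y x \<otimes> star G x y) = \<one>" .
  have "star G y x \<otimes> star G x y = conjg G (inv x) (conjg G x (star G y x \<otimes> star G x y))"
    using assms by simp
  also have "\<dots> = \<one>" using x by (simp add: conj_one)
  finally have "star G y x \<otimes> star G x y = \<one>" .
  then show ?thesis
    using assms by (intro inv_equality[symmetric]) auto
qed

lemma ideal_star_left:
  assumes "mla_ideal N G" "n \<in> N" "b \<in> carrier G"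
  shows "star G n b \<in> N"
proof -
  have N: "subgroup N G" using assms(1) by (rule mla_ideal_subgroup)
  have "star G n b = inv (star G b n)"
    using star_swap[OF assms(3) subgroup.mem_carrier[OF N assms(2)]] .
  moreover have "star G b n \<in> N" using assms by (simp add: mla_ideal_def)
  ultimately show ?thesis using subgroup.m_inv_closed[OF N] by simp
qed

lemma star_generate_right:
  assumes H: "subgroup H G" and S: "S \<subseteq> carrier G" and a: "a \<in> carrier G"
    and conj: "\<And>g h. g \<in> generate G S \<Longrightarrow> h \<in> H \<Longrightarrow> conjg G g h \<in> H"
    and gens: "\<And>s. s \<in> S \<Longrightarrow> star G a s \<in> H"
    and b: "b \<in> generate G S"
  shows "star G a b \<in> H"
  using b
proof (induction b rule: generate.induct)
  case one
  then show ?case using a subgroup.one_closed[OF H] by simp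
next
  case (incl s)
  then show ?case by (rule gens)
next
  case (inv s)
  then have "star G a (inv s) = conjg G (inv s) (inv (star G a s))"
    using a S by (intro star_inv_right) auto
  then show ?case
    using inv gens conj generate.inv subgroup.m_inv_closed[OF H] by metis
next
  case (eng g h)
  then have "star G a (g \<otimes> h) = star G a g \<otimes> conjg G g (star G a h)"
    using a generate_in_carrier[OF S] by (intro star_mult_right) auto
  then show ?case using eng conj subgroup.m_closed[OF H] by metis
qed

lemma star_generate_left:
  assumes H: "subgroup H G" and S: "S \<subseteq> carrier G" and b: "b \<in> carrier G"
    and conj: "\<And>g h. g \<in> generate G S \<Longrightarrow> h \<in> H \<Longrightarrow> conjg G g h \<in> H"
    and gens: "\<And>s. s \<in> S \<Longrightarrow> star G s b \<in> H"
    and a: "a \<in> generate G S"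
  shows "star G a b \<in> H"
  using a
proof (induction a rule: generate.induct)
  case one
  then show ?case using b subgroup.one_closed[OF H] by simp
next
  case (incl s)
  then show ?case by (rule gens)
next
  case (inv s)
  then have "star G (inv s) b = inv (conjg G (inv s) (star G s b))"
    using b S by (intro star_inv_left) auto
  then show ?case
    using inv gens conj generate.inv subgroup.m_inv_closed[OF H] by metis
next
  case (eng g h)
  then have "star G (g \<otimes> h) b = conjg G g (star G h b) \<otimes> star G g b"
    using b generate_in_carrier[OF S] by (intro star_mult_left) auto
  then show ?case using eng conj subgroup.m_closed[OF H] by metis
qed

lemma star_generate_closed:
  assumes S: "S \<subseteq> carrier G"
    and gens: "\<And>s t. s \<in> S \<Longrightarrow> t \<in> S \<Longrightarrow> star G s t \<in> generate G S"
    and a: "a \<in> generate G S" and b: "b \<in> generate G S"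
  shows "star G a b \<in> generate G S"
proof -
  have H: "subgroup (generate G S) G" by (rule generate_is_subgroup[OF S])
  have conj: "conjg G g h \<in> generate G S" if "g \<in> generate G S" "h \<in> generate G S" for g h
    using that by (simp add: conjg_def subgroup.m_closed[OF H] subgroup.m_inv_closed[OF H])
  have "star G s b \<in> generate G S" if "s \<in> S" for s
    using star_generate_right[OF H S _ conj gens[OF that] b] that S by blast
  then show ?thesis
    using star_generate_left[OF H S _ conj _ a] b generate_in_carrier[OF S] by blast
qed

lemma star_generate_normal_right:
  assumes "H \<lhd> G" "S \<subseteq> carrier G" "a \<in> carrier G"
    and "\<And>s. s \<in> S \<Longrightarrow> star G a s \<in> H" and "b \<in> generate G S"
  shows "star G a b \<in> H"
proof (rule star_generate_right[OF normal_imp_subgroup[OF assms(1)] assms(2,3) _ assms(4,5)])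
  fix g h assume "g \<in> generate G S" "h \<in> H"
  then show "conjg G g h \<in> H"
    using normal_conjg[OF assms(1)] generate_in_carrier[OF assms(2)] by blast
qed

lemma star_generate_normal_left:
  assumes "H \<lhd> G" "S \<subseteq> carrier G" "b \<in> carrier G"
    and "\<And>s. s \<in> S \<Longrightarrow> star G s b \<in> H" and "a \<in> generate G S"
  shows "star G a b \<in> H"
proof (rule star_generate_left[OF normal_imp_subgroup[OF assms(1)] assms(2,3) _ assms(4,5)])
  fix g h assume "g \<in> generate G S" "h \<in> H"
  then show "conjg G g h \<in> H"
    using normal_conjg[OF assms(1)] generate_in_carrier[OF assms(2)] by blast
qed

lemma rcos_conjg_absorb:
  assumes "N \<lhd> G" "n \<in> N" "x \<in> carrier G"
  shows "N #> conjg G n x = N #> x"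
proof -
  have N: "subgroup N G" using assms(1) by (rule normal_imp_subgroup)
  have n: "n \<in> carrier G" using subgroup.mem_carrier[OF N assms(2)] .
  have "N #> conjg G n x = N #> (n \<otimes> (x \<otimes> inv n))"
    using n assms(3) by (simp add: conjg_def m_assoc)
  also have "\<dots> = N #> (x \<otimes> inv n)"
    using N assms n by (simp add: rcos_mult_left_absorb)
  also have "\<dots> = N #> x"
    using assms subgroup.m_inv_closed[OF N] by (simp add: rcos_mult_right_absorb)
  finally show ?thesis .
qed

lemma star_rcos_cong:
  assumes I: "mla_ideal N G"
    and carr: "a \<in> carrier G" "b \<in> carrier G" "a' \<in> carrier G" "b' \<in> carrier G"
    and eq: "N #> a = N #> a'" "N #> b = N #> b'"
  shows "N #> star G a b = N #> star G a' b'"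
proof -
  have nN: "N \<lhd> G" using I by (rule mla_ideal_normal)
  have N: "subgroup N G" using nN by (rule normal_imp_subgroup)
  obtain n where n: "n \<in> N" "a = n \<otimes> a'"
    using rcos_self[OF carr(1) N] eq(1) unfolding r_coset_def by blast
  obtain m where m: "m \<in> N" "b = m \<otimes> b'"
    using rcos_self[OF carr(2) N] eq(2) unfolding r_coset_def by blast
  have nc: "n \<in> carrier G" and mc: "m \<in> carrier G"
    using n m subgroup.mem_carrier[OF N] by auto
  have "N #> star G a b = N #> (conjg G n (star G a' b) \<otimes> star G n b)"
    using n nc carr by (simp add: star_mult_left)
  also have "\<dots> = N #> star G a' b"
    using nN n nc carr ideal_star_left[OF I] by (simp add: rcos_mult_right_absorb rcos_conjg_absorb)
  also have "\<dots> = N #> (star G a' m \<otimes> conjg G m (star G a' b'))"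
    using m mc carr by (simp add: star_mult_right)
  also have "\<dots> = N #> star G a' b'"
    using I N nN m mc carr
    by (simp add: mla_ideal_def rcos_mult_left_absorb rcos_conjg_absorb)
  finally show ?thesis .
qed

lemma MLA_Mod_mult_rcos:
  "\<lbrakk>N \<lhd> G; x \<in> carrier G; y \<in> carrier G\<rbrakk> \<Longrightarrow> (N #> x) \<otimes>\<^bsub>MLA_Mod G N\<^esub> (N #> y) = N #> (x \<otimes> y)"
  by (simp add: MLA_Mod_def normal.rcos_sum)

lemma group_MLA_Mod: "N \<lhd> G \<Longrightarrow> group (MLA_Mod G N)"
  using normal.factorgroup_is_group
  by (simp add: group_def monoid_def group_axioms_def Units_def MLA_Mod_def FactGroup_def)

lemma MLA_Mod_inv_rcos:
  assumes "N \<lhd> G" "x \<in> carrier G"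
  shows "inv\<^bsub>MLA_Mod G N\<^esub> (N #> x) = N #> inv x"
proof -
  have "inv\<^bsub>MLA_Mod G N\<^esub> (N #> x) = inv\<^bsub>G Mod N\<^esub> (N #> x)"
    by (simp add: m_inv_def MLA_Mod_def FactGroup_def)
  also have "\<dots> = set_inv (N #> x)"
    using normal.inv_FactGroup[OF assms(1)]
      rcosetsI[OF subgroup.subset[OF normal_imp_subgroup[OF assms(1)]] assms(2)]
    by (simp add: FactGroup_def)
  also have "\<dots> = N #> inv x" by (rule normal.rcos_inv[OF assms])
  finally show ?thesis .
qed

lemma MLA_Mod_conjg_rcos:
  "\<lbrakk>N \<lhd> G; x \<in> carrier G; y \<in> carrier G\<rbrakk> \<Longrightarrow> conjg (MLA_Mod G N) (N #> x) (N #> y) = N #> conjg G x y"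
  by (simp add: conjg_def MLA_Mod_mult_rcos MLA_Mod_inv_rcos)

lemma MLA_Mod_star_rcos:
  assumes "mla_ideal N G" "x \<in> carrier G" "y \<in> carrier G"
  shows "star (MLA_Mod G N) (N #> x) (N #> y) = N #> star G x y"
proof -
  have N: "subgroup N G" using assms(1) by (rule mla_ideal_subgroup)
  have "star (MLA_Mod G N) (N #> x) (N #> y)
      = N #> star G (SOME a. a \<in> N #> x) (SOME b. b \<in> N #> y)"
    by (simp add: MLA_Mod_def)
  also have "\<dots> = N #> star G x y"
    using rcos_some[OF N assms(2)] rcos_some[OF N assms(3)] assms
    by (intro star_rcos_cong) simp_all
  finally show ?thesis .
qed

lemma mla_MLA_Mod:
  assumes "mla_ideal N G"
  shows "mla (MLA_Mod G N)"
proof -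
  have nN: "N \<lhd> G" using assms by (rule mla_ideal_normal)
  note rcos_simps = MLA_Mod_carrier MLA_Mod_mult_rcos[OF nN] MLA_Mod_conjg_rcos[OF nN]
    MLA_Mod_star_rcos[OF assms] MLA_Mod_one
  show ?thesis
  proof (intro mla.intro mla_axioms.intro group_MLA_Mod[OF nN])
  qed (auto simp: RCOSETS_def rcos_simps rcosetsI star_self star_mult_right star_mult_left
      star_jacobi conjg_star normal_imp_subgroup[OF nN] subgroup.subset)
qed

lemma rcos_hom_MLA_Mod: "N \<lhd> G \<Longrightarrow> (\<lambda>x. N #> x) \<in> hom G (MLA_Mod G N)"
  by (intro homI)
    (simp_all add: MLA_Mod_carrier MLA_Mod_mult_rcos rcosetsI normal_imp_subgroup subgroup.subset)

end

section \<open>The tensor square\<close>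

definition tens_class :: "('a, 'b) mla_scheme \<Rightarrow> ('a \<times> 'a) mterm \<Rightarrow> ('a \<times> 'a) mterm set" where
  "tens_class H t = tens_rel H `` {t}"

lemma equiv_tens_rel: "equiv UNIV (tens_rel H)"
  by (rule equivI) (auto simp: refl_on_def sym_def trans_def intro: tens_rel.intros)

lemma tens_class_eq_iff: "tens_class H s = tens_class H t \<longleftrightarrow> (s, t) \<in> tens_rel H"
  unfolding tens_class_def using equiv_class_eq_iff[OF equiv_tens_rel] by auto

lemma tens_class_eqI: "(s, t) \<in> tens_rel H \<Longrightarrow> tens_class H s = tens_class H t"
  by (simp add: tens_class_eq_iff)

lemma tens_class_self: "t \<in> tens_class H t"
  by (simp add: tens_class_def tens_rel.refl)

lemma tens_class_some: "(t, SOME u. u \<in> tens_class H t) \<in> tens_rel H"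
  using someI[of "\<lambda>u. u \<in> tens_class H t", OF tens_class_self] by (simp add: tens_class_def)

lemma tens_eq_class: "tens H x y = tens_class H (Gen (x, y))"
  by (simp add: tens_def tens_class_def)

lemma tensor_sq_carrier: "carrier (tensor_sq H) = {tens_class H t | t. wf_mterm (carrier H) t}"
  by (simp add: tensor_sq_def tens_class_def)

lemma tens_class_in_carrier: "wf_mterm (carrier H) t \<Longrightarrow> tens_class H t \<in> carrier (tensor_sq H)"
  by (auto simp: tensor_sq_carrier)

lemma tensor_sq_carrierE:
  assumes "c \<in> carrier (tensor_sq H)"
  obtains t where "wf_mterm (carrier H) t" "c = tens_class H t"
  using assms by (auto simp: tensor_sq_carrier)

lemma tensor_sq_mult: "tens_class H s \<otimes>\<^bsub>tensor_sq H\<^esub> tens_class H t = tens_class H (Mul s t)"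
proof -
  have "tens_class H (Mul s' t') = tens_class H (Mul s t)"
    if "s' \<in> tens_class H s" "t' \<in> tens_class H t" for s' t'
    by (rule tens_class_eqI, rule tens_rel.sym, rule tens_rel.cong_mul) (use that in \<open>auto simp: tens_class_def\<close>)
  then have "(\<Union>s'\<in>tens_class H s. \<Union>t'\<in>tens_class H t. tens_class H (Mul s' t')) = tens_class H (Mul s t)"
    using tens_class_self[of s H] tens_class_self[of t H] by blast
  then show ?thesis by (simp add: tensor_sq_def tens_class_def)
qed

lemma tensor_sq_star: "star (tensor_sq H) (tens_class H s) (tens_class H t) = tens_class H (Star s t)"
proof -
  have "tens_class H (Star s' t') = tens_class H (Star s t)"
    if "s' \<in> tens_class H s" "t' \<in> tens_class H t" for s' t'
    by (rule tens_class_eqI, rule tens_rel.sym, rule tens_rel.cong_star) (use that in \<open>auto simp: tens_class_def\<close>)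
  then have "(\<Union>s'\<in>tens_class H s. \<Union>t'\<in>tens_class H t. tens_class H (Star s' t')) = tens_class H (Star s t)"
    using tens_class_self[of s H] tens_class_self[of t H] by blast
  then show ?thesis by (simp add: tensor_sq_def tens_class_def)
qed

lemma tensor_sq_one: "\<one>\<^bsub>tensor_sq H\<^esub> = tens_class H One"
  by (simp add: tensor_sq_def tens_class_def)

lemma group_tensor_sq: "group (tensor_sq H)"
proof (rule groupI)
  fix c d assume "c \<in> carrier (tensor_sq H)" "d \<in> carrier (tensor_sq H)"
  then show "c \<otimes>\<^bsub>tensor_sq H\<^esub> d \<in> carrier (tensor_sq H)"
    by (auto elim!: tensor_sq_carrierE simp: tensor_sq_mult intro!: tens_class_in_carrier)
next
  show "\<one>\<^bsub>tensor_sq H\<^esub> \<in> carrier (tensor_sq H)"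
    by (auto simp: tensor_sq_one intro!: tens_class_in_carrier)
next
  fix c d e
  assume "c \<in> carrier (tensor_sq H)" "d \<in> carrier (tensor_sq H)" "e \<in> carrier (tensor_sq H)"
  then show "c \<otimes>\<^bsub>tensor_sq H\<^esub> d \<otimes>\<^bsub>tensor_sq H\<^esub> e = c \<otimes>\<^bsub>tensor_sq H\<^esub> (d \<otimes>\<^bsub>tensor_sq H\<^esub> e)"
    by (elim tensor_sq_carrierE) (simp add: tensor_sq_mult tens_class_eq_iff tens_rel.assoc)
next
  fix c assume "c \<in> carrier (tensor_sq H)"
  then show "\<one>\<^bsub>tensor_sq H\<^esub> \<otimes>\<^bsub>tensor_sq H\<^esub> c = c"
    by (elim tensor_sq_carrierE) (simp add: tensor_sq_mult tensor_sq_one tens_class_eq_iff tens_rel.lunit)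
next
  fix c assume "c \<in> carrier (tensor_sq H)"
  then obtain t where t: "wf_mterm (carrier H) t" "c = tens_class H t" by (rule tensor_sq_carrierE)
  show "\<exists>c'\<in>carrier (tensor_sq H). c' \<otimes>\<^bsub>tensor_sq H\<^esub> c = \<one>\<^bsub>tensor_sq H\<^esub>"
    using t by (intro bexI[of _ "tens_class H (Inv t)"])
      (auto simp: tensor_sq_mult tensor_sq_one tens_class_eq_iff tens_rel.linv intro: tens_class_in_carrier)
qed

lemma tensor_sq_inv:
  assumes "wf_mterm (carrier H) t"
  shows "inv\<^bsub>tensor_sq H\<^esub> (tens_class H t) = tens_class H (Inv t)"
  using assms
  by (intro group.inv_equality[OF group_tensor_sq])
    (auto simp: tensor_sq_mult tensor_sq_one tens_class_eq_iff tens_rel.linv intro: tens_class_in_carrier)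

lemma tensor_sq_conjg:
  "wf_mterm (carrier H) s \<Longrightarrow> conjg (tensor_sq H) (tens_class H s) (tens_class H t) = tens_class H (cjT s t)"
  by (simp add: conjg_def cjT_def tensor_sq_mult tensor_sq_inv)

lemma mla_tensor_sq: "mla (tensor_sq H)"
proof (intro mla.intro mla_axioms.intro group_tensor_sq)
  fix c d assume "c \<in> carrier (tensor_sq H)" "d \<in> carrier (tensor_sq H)"
  then show "star (tensor_sq H) c d \<in> carrier (tensor_sq H)"
    by (auto elim!: tensor_sq_carrierE simp: tensor_sq_star intro!: tens_class_in_carrier)
qed (elim tensor_sq_carrierE, simp add: tensor_sq_mult tensor_sq_star tensor_sq_one tensor_sq_conjg
    tens_class_eq_iff tens_rel.star_self tens_rel.star_mul_right tens_rel.star_mul_left tens_rel.jacobi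
    tens_rel.star_conj)+

definition tensors :: "('a, 'b) mla_scheme \<Rightarrow> ('a \<times> 'a) mterm set set" where
  "tensors H = {tens H x y | x y. x \<in> carrier H \<and> y \<in> carrier H}"

lemma tens_in_carrier [intro, simp]:
  "\<lbrakk>x \<in> carrier H; y \<in> carrier H\<rbrakk> \<Longrightarrow> tens H x y \<in> carrier (tensor_sq H)"
  by (simp add: tens_eq_class tens_class_in_carrier)

lemma tensors_subset_carrier: "tensors H \<subseteq> carrier (tensor_sq H)"
  by (auto simp: tensors_def)

context mla begin

lemma tensor_sq_rel1:
  "\<lbrakk>x \<in> carrier G; y \<in> carrier G; y' \<in> carrier G\<rbrakk> \<Longrightarrow>
    tens G x (y \<otimes> y') = tens G x y \<otimes>\<^bsub>tensor_sq G\<^esub> tens G (conjg G y x) (conjg G y y')"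
  by (simp add: tens_eq_class tensor_sq_mult tens_class_eq_iff tens_rel.rel1)

lemma tensor_sq_rel2:
  "\<lbrakk>x \<in> carrier G; x' \<in> carrier G; y \<in> carrier G\<rbrakk> \<Longrightarrow>
    tens G (x \<otimes> x') y = tens G (conjg G x x') (conjg G x y) \<otimes>\<^bsub>tensor_sq G\<^esub> tens G x y"
  by (simp add: tens_eq_class tensor_sq_mult tens_class_eq_iff tens_rel.rel2)

lemma tensor_sq_rel3:
  "\<lbrakk>x \<in> carrier G; x' \<in> carrier G; y \<in> carrier G\<rbrakk> \<Longrightarrow>
    tens G (star G x x') (conjg G x' y)
      \<otimes>\<^bsub>tensor_sq G\<^esub> inv\<^bsub>tensor_sq G\<^esub> tens G (conjg G y x) (star G x' y)
      \<otimes>\<^bsub>tensor_sq G\<^esub> inv\<^bsub>tensor_sq G\<^esub> tens G (conjg G x x') (inv (star G x y))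
    = \<one>\<^bsub>tensor_sq G\<^esub>"
  by (simp add: tens_eq_class tensor_sq_inv tensor_sq_mult tensor_sq_one tens_class_eq_iff tens_rel.rel3)

lemma tensor_sq_rel4:
  "\<lbrakk>x \<in> carrier G; y \<in> carrier G; y' \<in> carrier G\<rbrakk> \<Longrightarrow>
    tens G (conjg G y' x) (star G y y')
      \<otimes>\<^bsub>tensor_sq G\<^esub> inv\<^bsub>tensor_sq G\<^esub> tens G (inv (star G y x)) (conjg G y y')
      \<otimes>\<^bsub>tensor_sq G\<^esub> inv\<^bsub>tensor_sq G\<^esub> tens G (star G y' x) (conjg G x y)
    = \<one>\<^bsub>tensor_sq G\<^esub>"
  by (simp add: tens_eq_class tensor_sq_inv tensor_sq_mult tensor_sq_one tens_class_eq_iff tens_rel.rel4)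

lemma tensor_sq_rel5:
  "\<lbrakk>x \<in> carrier G; y \<in> carrier G; x' \<in> carrier G; y' \<in> carrier G\<rbrakk> \<Longrightarrow>
    star (tensor_sq G) (tens G x y) (tens G x' y') = tens G (inv (star G y x)) (star G x' y')"
  by (simp add: tens_eq_class tensor_sq_star tens_class_eq_iff tens_rel.rel5)

lemma carrier_tensor_sq_generate: "carrier (tensor_sq G) = generate (tensor_sq G) (tensors G)"
proof
  interpret T: mla "tensor_sq G" by (rule mla_tensor_sq)
  show "generate (tensor_sq G) (tensors G) \<subseteq> carrier (tensor_sq G)"
    using T.generate_in_carrier[OF tensors_subset_carrier] by blast
  have "tens_class G t \<in> generate (tensor_sq G) (tensors G)" if "wf_mterm (carrier G) t" for t
    using that
  proof (induction t)
    case (Gen p)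
    then show ?case by (cases p) (auto simp: tensors_def tens_eq_class intro: generate.incl)
  next
    case One
    then show ?case using generate.one by (simp add: tensor_sq_one[symmetric])
  next
    case (Mul s t)
    then show ?case by (auto simp: tensor_sq_mult[symmetric] intro: generate.eng)
  next
    case (Inv s)
    then show ?case
      using T.generate_m_inv_closed[OF tensors_subset_carrier] by (simp add: tensor_sq_inv[symmetric])
  next
    case (Star s t)
    have "star (tensor_sq G) u v \<in> generate (tensor_sq G) (tensors G)"
      if "u \<in> tensors G" "v \<in> tensors G" for u v
      using that unfolding tensors_def
      by (force simp: tensor_sq_rel5 intro: generate.incl)
    then show ?case
      using Star T.star_generate_closed[OF tensors_subset_carrier] by (simp add: tensor_sq_star[symmetric])
  qed
  then show "carrier (tensor_sq G) \<subseteq> generate (tensor_sq G) (tensors G)"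
    by (auto elim: tensor_sq_carrierE)
qed

lemma tens_one_left: "y \<in> carrier G \<Longrightarrow> tens G \<one> y = \<one>\<^bsub>tensor_sq G\<^esub>"
  using tensor_sq_rel2[of \<one> \<one> y] by (simp add: group.l_cancel_one'[OF group_tensor_sq])

lemma tens_one_right: "x \<in> carrier G \<Longrightarrow> tens G x \<one> = \<one>\<^bsub>tensor_sq G\<^esub>"
  using tensor_sq_rel1[of x \<one> \<one>] by (simp add: group.l_cancel_one'[OF group_tensor_sq])

lemma tens_commute_conjg:
  assumes "x \<in> carrier G" "y \<in> carrier G" "x' \<in> carrier G" "y' \<in> carrier G"
  shows "tens G x y \<otimes>\<^bsub>tensor_sq G\<^esub> tens G (conjg G (y \<otimes> x) x') (conjg G (y \<otimes> x) y')
    = tens G (conjg G (x \<otimes> y) x') (conjg G (x \<otimes> y) y') \<otimes>\<^bsub>tensor_sq G\<^esub> tens G x y"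
proof -
  interpret T: group "tensor_sq G" by (rule group_tensor_sq)
  let ?T = "tensor_sq G"
  define P where "P = tens G (conjg G x x') (conjg G x y)"
  define C where "C = tens G x y"
  define D where "D = tens G (conjg G y x) (conjg G y y')"
  define Q1 where "Q1 = tens G (conjg G (x \<otimes> y) x') (conjg G (x \<otimes> y) y')"
  define Q2 where "Q2 = tens G (conjg G (y \<otimes> x) x') (conjg G (y \<otimes> x) y')"
  have carr: "P \<in> carrier ?T" "C \<in> carrier ?T" "D \<in> carrier ?T" "Q1 \<in> carrier ?T" "Q2 \<in> carrier ?T"
    using assms by (simp_all add: P_def C_def D_def Q1_def Q2_def)
  \<comment> \<open>expand xx' \<otimes> yy' by relation 2 then 1, and by relation 1 then 2\<close>
  have "tens G (x \<otimes> x') (y \<otimes> y') = tens G (conjg G x x') (conjg G x y \<otimes> conjg G x y') \<otimes>\<^bsub>?T\<^esub> tens G x (y \<otimes> y')"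
    using assms by (simp add: tensor_sq_rel2 conjg_mult)
  also have "\<dots> = (P \<otimes>\<^bsub>?T\<^esub> Q1) \<otimes>\<^bsub>?T\<^esub> (C \<otimes>\<^bsub>?T\<^esub> D)"
    using assms by (simp add: tensor_sq_rel1 conjg_conjg P_def Q1_def C_def D_def)
  finally have expand1: "tens G (x \<otimes> x') (y \<otimes> y') = (P \<otimes>\<^bsub>?T\<^esub> Q1) \<otimes>\<^bsub>?T\<^esub> (C \<otimes>\<^bsub>?T\<^esub> D)" .
  have "tens G (x \<otimes> x') (y \<otimes> y') = tens G (x \<otimes> x') y \<otimes>\<^bsub>?T\<^esub> tens G (conjg G y x \<otimes> conjg G y x') (conjg G y y')"
    using assms by (simp add: tensor_sq_rel1 conjg_mult)
  also have "\<dots> = (P \<otimes>\<^bsub>?T\<^esub> C) \<otimes>\<^bsub>?T\<^esub> (Q2 \<otimes>\<^bsub>?T\<^esub> D)"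
    using assms by (simp add: tensor_sq_rel2 conjg_conjg P_def Q2_def C_def D_def)
  finally have expand2: "tens G (x \<otimes> x') (y \<otimes> y') = (P \<otimes>\<^bsub>?T\<^esub> C) \<otimes>\<^bsub>?T\<^esub> (Q2 \<otimes>\<^bsub>?T\<^esub> D)" .
  have "P \<otimes>\<^bsub>?T\<^esub> ((Q1 \<otimes>\<^bsub>?T\<^esub> C) \<otimes>\<^bsub>?T\<^esub> D) = P \<otimes>\<^bsub>?T\<^esub> ((C \<otimes>\<^bsub>?T\<^esub> Q2) \<otimes>\<^bsub>?T\<^esub> D)"
    using expand1 expand2 carr by (simp add: T.m_assoc)
  then have "Q1 \<otimes>\<^bsub>?T\<^esub> C = C \<otimes>\<^bsub>?T\<^esub> Q2" using carr by simp
  then show ?thesis by (simp add: Q1_def Q2_def C_def)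
qed

lemma tens_conj_tens:
  assumes "x \<in> carrier G" "y \<in> carrier G" "a \<in> carrier G" "b \<in> carrier G"
  defines "c \<equiv> x \<otimes> y \<otimes> inv (y \<otimes> x)" and "d \<equiv> y \<otimes> x \<otimes> inv (x \<otimes> y)"
  shows "tens G x y \<otimes>\<^bsub>tensor_sq G\<^esub> tens G a b \<otimes>\<^bsub>tensor_sq G\<^esub> inv\<^bsub>tensor_sq G\<^esub> tens G x y
      = tens G (conjg G c a) (conjg G c b)"
    and "inv\<^bsub>tensor_sq G\<^esub> tens G x y \<otimes>\<^bsub>tensor_sq G\<^esub> tens G a b \<otimes>\<^bsub>tensor_sq G\<^esub> tens G x y
      = tens G (conjg G d a) (conjg G d b)"
proof -
  interpret T: group "tensor_sq G" by (rule group_tensor_sq)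
  have "tens G x y \<otimes>\<^bsub>tensor_sq G\<^esub> tens G a b = tens G (conjg G c a) (conjg G c b) \<otimes>\<^bsub>tensor_sq G\<^esub> tens G x y"
    using tens_commute_conjg[of x y "conjg G (inv (y \<otimes> x)) a" "conjg G (inv (y \<otimes> x)) b"] assms
    by (simp add: conjg_conjg_mult m_assoc)
  then show "tens G x y \<otimes>\<^bsub>tensor_sq G\<^esub> tens G a b \<otimes>\<^bsub>tensor_sq G\<^esub> inv\<^bsub>tensor_sq G\<^esub> tens G x y
      = tens G (conjg G c a) (conjg G c b)"
    using assms by (simp add: T.m_assoc)
  have comm: "tens G x y \<otimes>\<^bsub>tensor_sq G\<^esub> tens G (conjg G d a) (conjg G d b)
      = tens G a b \<otimes>\<^bsub>tensor_sq G\<^esub> tens G x y"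
    using tens_commute_conjg[of x y "conjg G (inv (x \<otimes> y)) a" "conjg G (inv (x \<otimes> y)) b"] assms
    by (simp add: conjg_conjg_mult)
  have "inv\<^bsub>tensor_sq G\<^esub> tens G x y \<otimes>\<^bsub>tensor_sq G\<^esub> tens G a b \<otimes>\<^bsub>tensor_sq G\<^esub> tens G x y
      = inv\<^bsub>tensor_sq G\<^esub> tens G x y \<otimes>\<^bsub>tensor_sq G\<^esub> (tens G a b \<otimes>\<^bsub>tensor_sq G\<^esub> tens G x y)"
    using assms by (simp add: T.m_assoc)
  also have "\<dots> = inv\<^bsub>tensor_sq G\<^esub> tens G x y \<otimes>\<^bsub>tensor_sq G\<^esub>
      (tens G x y \<otimes>\<^bsub>tensor_sq G\<^esub> tens G (conjg G d a) (conjg G d b))"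
    by (simp only: comm)
  also have "\<dots> = tens G (conjg G d a) (conjg G d b)"
    using assms by simp
  finally show "inv\<^bsub>tensor_sq G\<^esub> tens G x y \<otimes>\<^bsub>tensor_sq G\<^esub> tens G a b \<otimes>\<^bsub>tensor_sq G\<^esub> tens G x y
      = tens G (conjg G d a) (conjg G d b)" .
qed

lemma normal_generate_tensors:
  assumes carr: "\<And>a b. P a b \<Longrightarrow> a \<in> carrier G \<and> b \<in> carrier G"
    and conj: "\<And>a b g. P a b \<Longrightarrow> g \<in> carrier G \<Longrightarrow> P (conjg G g a) (conjg G g b)"
  shows "generate (tensor_sq G) {tens G a b | a b. P a b} \<lhd> tensor_sq G"
proof (rule group.normal_generate_by_generators[OF group_tensor_sq _ tensors_subset_carrier])
  show "{tens G a b | a b. P a b} \<subseteq> carrier (tensor_sq G)" using carr by auto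
  show "carrier (tensor_sq G) \<subseteq> generate (tensor_sq G) (tensors G)"
    by (simp add: carrier_tensor_sq_generate)
  fix u s assume "u \<in> tensors G" "s \<in> {tens G a b | a b. P a b}"
  then obtain x y a b where xy: "x \<in> carrier G" "y \<in> carrier G"
    and ab: "P a b" and us: "u = tens G x y" "s = tens G a b"
    unfolding tensors_def by blast
  have mem: "tens G (conjg G g a) (conjg G g b) \<in> {tens G a b | a b. P a b}" if "g \<in> carrier G" for g
    using conj[OF ab that] by blast
  have ab_carr: "a \<in> carrier G" "b \<in> carrier G" using carr[OF ab] by simp_all
  show "u \<otimes>\<^bsub>tensor_sq G\<^esub> s \<otimes>\<^bsub>tensor_sq G\<^esub> inv\<^bsub>tensor_sq G\<^esub> u \<in> {tens G a b | a b. P a b}"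
    and "inv\<^bsub>tensor_sq G\<^esub> u \<otimes>\<^bsub>tensor_sq G\<^esub> s \<otimes>\<^bsub>tensor_sq G\<^esub> u \<in> {tens G a b | a b. P a b}"
    unfolding us tens_conj_tens[OF xy ab_carr] by (rule mem, simp add: xy)+
qed

end

section \<open>The universal property of the tensor square\<close>

locale mla_pairing = H: mla H + mla M
  for H :: "('a, 'c) mla_scheme" and M :: "('b, 'd) mla_scheme" (structure) +
  fixes f :: "'a \<Rightarrow> 'a \<Rightarrow> 'b"
  assumes pairing_closed: "\<lbrakk>x \<in> carrier H; y \<in> carrier H\<rbrakk> \<Longrightarrow> f x y \<in> carrier M"
    and pairing_rel1: "\<lbrakk>x \<in> carrier H; y \<in> carrier H; y' \<in> carrier H\<rbrakk> \<Longrightarrow>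
      f x (y \<otimes>\<^bsub>H\<^esub> y') = f x y \<otimes> f (conjg H y x) (conjg H y y')"
    and pairing_rel2: "\<lbrakk>x \<in> carrier H; x' \<in> carrier H; y \<in> carrier H\<rbrakk> \<Longrightarrow>
      f (x \<otimes>\<^bsub>H\<^esub> x') y = f (conjg H x x') (conjg H x y) \<otimes> f x y"
    and pairing_rel3: "\<lbrakk>x \<in> carrier H; x' \<in> carrier H; y \<in> carrier H\<rbrakk> \<Longrightarrow>
      f (star H x x') (conjg H x' y) \<otimes> inv (f (conjg H y x) (star H x' y))
        \<otimes> inv (f (conjg H x x') (inv\<^bsub>H\<^esub> (star H x y))) = \<one>"
    and pairing_rel4: "\<lbrakk>x \<in> carrier H; y \<in> carrier H; y' \<in> carrier H\<rbrakk> \<Longrightarrow>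
      f (conjg H y' x) (star H y y') \<otimes> inv (f (inv\<^bsub>H\<^esub> (star H y x)) (conjg H y y'))
        \<otimes> inv (f (star H y' x) (conjg H x y)) = \<one>"
    and pairing_rel5: "\<lbrakk>x \<in> carrier H; y \<in> carrier H; x' \<in> carrier H; y' \<in> carrier H\<rbrakk> \<Longrightarrow>
      star M (f x y) (f x' y') = f (inv\<^bsub>H\<^esub> (star H y x)) (star H x' y')"

text \<open>Generators off the carrier are sent to \<one>, which keeps every value inside carrier M.\<close>

fun eval_mterm :: "('b, 'd) mla_scheme \<Rightarrow> 'a set \<Rightarrow> ('a \<Rightarrow> 'a \<Rightarrow> 'b) \<Rightarrow> ('a \<times> 'a) mterm \<Rightarrow> 'b" where
  "eval_mterm M A f (Gen (x, y)) = (if x \<in> A \<and> y \<in> A then f x y else \<one>\<^bsub>M\<^esub>)"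
| "eval_mterm M A f One = \<one>\<^bsub>M\<^esub>"
| "eval_mterm M A f (Mul s t) = eval_mterm M A f s \<otimes>\<^bsub>M\<^esub> eval_mterm M A f t"
| "eval_mterm M A f (Inv s) = inv\<^bsub>M\<^esub> (eval_mterm M A f s)"
| "eval_mterm M A f (Star s t) = star M (eval_mterm M A f s) (eval_mterm M A f t)"

definition tens_lift ::
  "('a, 'c) mla_scheme \<Rightarrow> ('b, 'd) mla_scheme \<Rightarrow> ('a \<Rightarrow> 'a \<Rightarrow> 'b) \<Rightarrow> ('a \<times> 'a) mterm set \<Rightarrow> 'b" where
  "tens_lift H M f c = eval_mterm M (carrier H) f (SOME t. t \<in> c)"

context mla_pairing begin

lemma eval_mterm_closed [simp]: "eval_mterm M (carrier H) f t \<in> carrier M"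
proof (induction t)
  case (Gen p)
  then show ?case by (cases p) (simp add: pairing_closed)
qed simp_all

lemma eval_mterm_cjT [simp]:
  "eval_mterm M (carrier H) f (cjT s t) = conjg M (eval_mterm M (carrier H) f s) (eval_mterm M (carrier H) f t)"
  by (simp add: cjT_def conjg_def)

lemma eval_mterm_tens_rel:
  "(s, t) \<in> tens_rel H \<Longrightarrow> eval_mterm M (carrier H) f s = eval_mterm M (carrier H) f t"
proof (induction rule: tens_rel.induct)
  case (jacobi x y z)
  show ?case by (simp add: star_jacobi)
next
  case (rel3 x x' y)
  then show ?case using pairing_rel3[of x x' y] by simp
next
  case (rel4 x y y')
  then show ?case using pairing_rel4[of x y y'] by simp
qed (simp_all add: m_assoc star_self star_mult_right star_mult_left conjg_star
    pairing_rel1 pairing_rel2 pairing_rel5)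

lemma tens_lift_class: "tens_lift H M f (tens_class H t) = eval_mterm M (carrier H) f t"
  unfolding tens_lift_def using eval_mterm_tens_rel[OF tens_class_some] by simp

lemma tens_lift_tens:
  "\<lbrakk>x \<in> carrier H; y \<in> carrier H\<rbrakk> \<Longrightarrow> tens_lift H M f (tens H x y) = f x y"
  by (simp add: tens_eq_class tens_lift_class)

lemma tens_lift_mla_hom: "tens_lift H M f \<in> mla_hom (tensor_sq H) M"
  unfolding mla_hom_def
proof (intro CollectI conjI homI ballI)
  fix c assume "c \<in> carrier (tensor_sq H)"
  then show "tens_lift H M f c \<in> carrier M"
    by (auto elim: tensor_sq_carrierE simp: tens_lift_class)
next
  fix c d assume "c \<in> carrier (tensor_sq H)" "d \<in> carrier (tensor_sq H)"
  then show "tens_lift H M f (c \<otimes>\<^bsub>tensor_sq H\<^esub> d) = tens_lift H M f c \<otimes> tens_lift H M f d"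
    and "tens_lift H M f (star (tensor_sq H) c d) = star M (tens_lift H M f c) (tens_lift H M f d)"
    by (auto elim!: tensor_sq_carrierE simp: tensor_sq_mult tensor_sq_star tens_lift_class)
qed

end

section \<open>Tensor square of a quotient\<close>

locale mla_with_ideal = mla G for G :: "('a, 'b) mla_scheme" (structure) +
  fixes I :: "'a set"
  assumes ideal: "mla_ideal I G"
begin

abbreviation "T \<equiv> tensor_sq G"
abbreviation "Q \<equiv> MLA_Mod G I"
abbreviation "N \<equiv> left_tens I G <#>\<^bsub>T\<^esub> right_tens G I"

end

sublocale mla_with_ideal \<subseteq> T: mla "tensor_sq G"
  by (rule mla_tensor_sq)

sublocale mla_with_ideal \<subseteq> Q: mla "MLA_Mod G I"
  by (rule mla_MLA_Mod[OF ideal])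

context mla_with_ideal begin

lemma I_normal: "I \<lhd> G"
  using ideal by (rule mla_ideal_normal)

lemma I_subset: "I \<subseteq> carrier G"
  using ideal mla_ideal_subgroup subgroup.subset by blast

lemma left_tens_normal: "left_tens I G \<lhd> T"
  unfolding left_tens_def
  by (rule normal_generate_tensors[where P = "\<lambda>a b. a \<in> I \<and> b \<in> carrier G", simplified])
    (use I_subset normal_conjg[OF I_normal] in auto)

lemma right_tens_normal: "right_tens G I \<lhd> T"
  unfolding right_tens_def
  by (rule normal_generate_tensors[where P = "\<lambda>a b. a \<in> carrier G \<and> b \<in> I", simplified])
    (use I_subset normal_conjg[OF I_normal] in auto)

lemma N_normal: "N \<lhd> T"
  by (rule T.normal_subgroup_set_mult_closed[OF left_tens_normal right_tens_normal])

lemma N_subgroup: "subgroup N T"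
  by (rule normal_imp_subgroup[OF N_normal])

lemma tens_mem_N:
  assumes "a \<in> carrier G" "b \<in> carrier G" "a \<in> I \<or> b \<in> I"
  shows "tens G a b \<in> N"
proof -
  have L: "subgroup (left_tens I G) T" and R: "subgroup (right_tens G I) T"
    using left_tens_normal right_tens_normal normal_imp_subgroup by auto
  show ?thesis
  proof (cases "a \<in> I")
    case True
    then have "tens G a b \<in> left_tens I G"
      using assms by (auto simp: left_tens_def intro: generate.incl)
    then have "tens G a b \<otimes>\<^bsub>T\<^esub> \<one>\<^bsub>T\<^esub> \<in> N"
      using subgroup.one_closed[OF R] unfolding set_mult_def by blast
    then show ?thesis using assms by simp
  next
    case False
    then have "tens G a b \<in> right_tens G I"
      using assms by (auto simp: right_tens_def intro: generate.incl)
    then have "\<one>\<^bsub>T\<^esub> \<otimes>\<^bsub>T\<^esub> tens G a b \<in> N"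
      using subgroup.one_closed[OF L] unfolding set_mult_def by blast
    then show ?thesis using assms by simp
  qed
qed

lemma star_tens_mem_N:
  assumes c: "c \<in> carrier T" and ab: "a \<in> carrier G" "b \<in> carrier G" "a \<in> I \<or> b \<in> I"
  shows "star T c (tens G a b) \<in> N"
proof (rule T.star_generate_normal_left[OF N_normal tensors_subset_carrier])
  show "c \<in> generate T (tensors G)" using c carrier_tensor_sq_generate by simp
  fix u assume "u \<in> tensors G"
  then obtain x y where xy: "x \<in> carrier G" "y \<in> carrier G" "u = tens G x y"
    unfolding tensors_def by blast
  have "star G a b \<in> I"
    using ab ideal ideal_star_left unfolding mla_ideal_def by blast
  then show "star T u (tens G a b) \<in> N"
    using xy ab by (simp add: tensor_sq_rel5 tens_mem_N)
qed (use ab in simp)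

lemma N_ideal: "mla_ideal N T"
  unfolding mla_ideal_def
proof (intro conjI N_normal ballI)
  fix c n assume c: "c \<in> carrier T" and n: "n \<in> N"
  have "star T c l \<in> N" if "l \<in> left_tens I G" for l
    by (rule T.star_generate_normal_right[OF N_normal _ c _ that[unfolded left_tens_def]])
      (use I_subset in \<open>auto intro!: star_tens_mem_N[OF c]\<close>)
  moreover have "star T c r \<in> N" if "r \<in> right_tens G I" for r
    by (rule T.star_generate_normal_right[OF N_normal _ c _ that[unfolded right_tens_def]])
      (use I_subset in \<open>auto intro!: star_tens_mem_N[OF c]\<close>)
  moreover obtain l r where lr: "l \<in> left_tens I G" "r \<in> right_tens G I" "n = l \<otimes>\<^bsub>T\<^esub> r"
    using n unfolding set_mult_def by blast
  moreover have "l \<in> carrier T" "r \<in> carrier T"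
    using lr left_tens_normal right_tens_normal normal_imp_subgroup subgroup.mem_carrier by metis+
  ultimately show "star T c n \<in> N"
    using c T.normal_conjg[OF N_normal] subgroup.m_closed[OF N_subgroup] by (simp add: T.star_mult_right)
qed

definition tens_coset :: "'a set \<Rightarrow> 'a set \<Rightarrow> ('a \<times> 'a) mterm set set" where
  "tens_coset A B = N #>\<^bsub>T\<^esub> tens G (SOME a. a \<in> A) (SOME b. b \<in> B)"

lemma tens_rcos_cong:
  assumes carr: "a \<in> carrier G" "a' \<in> carrier G" "b \<in> carrier G" "b' \<in> carrier G"
    and eq: "I #> a = I #> a'" "I #> b = I #> b'"
  shows "N #>\<^bsub>T\<^esub> tens G a b = N #>\<^bsub>T\<^esub> tens G a' b'"
proof -
  obtain j where j: "j \<in> I" "a = a' \<otimes> j"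
    using rcos_eq_obtain_right[OF I_normal carr(1,2) eq(1)] .
  obtain k where k: "k \<in> I" "b = b' \<otimes> k"
    using rcos_eq_obtain_right[OF I_normal carr(3,4) eq(2)] .
  have jk: "j \<in> carrier G" "k \<in> carrier G" using j k I_subset by auto
  have "N #>\<^bsub>T\<^esub> tens G a b = N #>\<^bsub>T\<^esub> (tens G (conjg G a' j) (conjg G a' b) \<otimes>\<^bsub>T\<^esub> tens G a' b)"
    using j carr jk by (simp add: tensor_sq_rel2)
  also have "\<dots> = N #>\<^bsub>T\<^esub> tens G a' b"
    using carr jk j normal_conjg[OF I_normal]
    by (intro T.rcos_mult_left_absorb[OF N_subgroup] tens_mem_N tens_in_carrier) auto
  also have "\<dots> = N #>\<^bsub>T\<^esub> (tens G a' b' \<otimes>\<^bsub>T\<^esub> tens G (conjg G b' a') (conjg G b' k))"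
    using k carr jk by (simp add: tensor_sq_rel1)
  also have "\<dots> = N #>\<^bsub>T\<^esub> tens G a' b'"
    using carr jk k normal_conjg[OF I_normal]
    by (intro T.rcos_mult_right_absorb[OF N_normal] tens_mem_N tens_in_carrier) auto
  finally show ?thesis .
qed

lemma tens_coset_rcos:
  "\<lbrakk>x \<in> carrier G; y \<in> carrier G\<rbrakk> \<Longrightarrow> tens_coset (I #> x) (I #> y) = N #>\<^bsub>T\<^esub> tens G x y"
  unfolding tens_coset_def
  using rcos_some[OF normal_imp_subgroup[OF I_normal]] by (intro tens_rcos_cong) auto

lemmas Q_rcos_simps = MLA_Mod_carrier MLA_Mod_mult_rcos[OF I_normal] MLA_Mod_inv_rcos[OF I_normal]
  MLA_Mod_conjg_rcos[OF I_normal] MLA_Mod_star_rcos[OF ideal] rcosetsI[OF I_subset]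

sublocale proj: mla_pairing G "tensor_sq Q" "\<lambda>x y. tens Q (I #> x) (I #> y)"
  apply (intro mla_pairing.intro mla_pairing_axioms.intro mla_axioms mla_tensor_sq)
  subgoal by (simp add: Q_rcos_simps)
  subgoal for x y y' using Q.tensor_sq_rel1[of "I #> x" "I #> y" "I #> y'"] by (simp add: Q_rcos_simps)
  subgoal for x x' y using Q.tensor_sq_rel2[of "I #> x" "I #> x'" "I #> y"] by (simp add: Q_rcos_simps)
  subgoal for x x' y using Q.tensor_sq_rel3[of "I #> x" "I #> x'" "I #> y"] by (simp add: Q_rcos_simps)
  subgoal for x y y' using Q.tensor_sq_rel4[of "I #> x" "I #> y" "I #> y'"] by (simp add: Q_rcos_simps)
  subgoal for x y x' y' using Q.tensor_sq_rel5[of "I #> x" "I #> y" "I #> x'" "I #> y'"]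
    by (simp add: Q_rcos_simps)
  done

lemmas TN_rcos_simps = MLA_Mod_carrier T.MLA_Mod_mult_rcos[OF N_normal] T.MLA_Mod_inv_rcos[OF N_normal]
  T.MLA_Mod_star_rcos[OF N_ideal] MLA_Mod_one T.rcosetsI[OF subgroup.subset[OF N_subgroup]]
  T.coset_mult_one[OF subgroup.subset[OF N_subgroup]]

sublocale iso: mla_pairing Q "MLA_Mod T N" tens_coset
  apply (intro mla_pairing.intro mla_pairing_axioms.intro Q.mla_axioms T.mla_MLA_Mod[OF N_ideal])
  apply (auto simp: Q_rcos_simps RCOSETS_def tens_coset_rcos TN_rcos_simps
      tensor_sq_rel1 tensor_sq_rel2 tensor_sq_rel3 tensor_sq_rel4 tensor_sq_rel5)
  done

abbreviation "tensor_proj \<equiv> tens_lift G (tensor_sq Q) (\<lambda>x y. tens Q (I #> x) (I #> y))"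
abbreviation "tensor_iso \<equiv> tens_lift Q (MLA_Mod T N) tens_coset"

lemma tensor_proj_hom: "tensor_proj \<in> hom T (tensor_sq Q)"
  using proj.tens_lift_mla_hom by (simp add: mla_hom_def)

sublocale proj_hom: group_hom T "tensor_sq Q" tensor_proj
  by (intro group_hom.intro group_hom_axioms.intro T.is_group group_tensor_sq tensor_proj_hom)

lemma tensor_iso_hom: "tensor_iso \<in> hom (tensor_sq Q) (MLA_Mod T N)"
  using iso.tens_lift_mla_hom by (simp add: mla_hom_def)

lemma tensor_proj_N:
  assumes "n \<in> N"
  shows "tensor_proj n = \<one>\<^bsub>tensor_sq Q\<^esub>"
proof -
  have vanish: "tensor_proj (tens G a b) = \<one>\<^bsub>tensor_sq Q\<^esub>"
    if "a \<in> carrier G" "b \<in> carrier G" "a \<in> I \<or> b \<in> I" for a b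
  proof -
    have "I #> h = \<one>\<^bsub>Q\<^esub>" if "h \<in> I" for h
      using subgroup.rcos_const[OF mla_ideal_subgroup[OF ideal] is_group that] by (simp add: MLA_Mod_one)
    then show ?thesis
      using that by (auto simp: proj.tens_lift_tens Q_rcos_simps Q.tens_one_left Q.tens_one_right)
  qed
  have "left_tens I G \<subseteq> kernel T (tensor_sq Q) tensor_proj"
    unfolding left_tens_def
    by (rule T.generate_subgroup_incl[OF _ proj_hom.subgroup_kernel])
      (use I_subset vanish in \<open>auto simp: kernel_def\<close>)
  moreover have "right_tens G I \<subseteq> kernel T (tensor_sq Q) tensor_proj"
    unfolding right_tens_def
    by (rule T.generate_subgroup_incl[OF _ proj_hom.subgroup_kernel])
      (use I_subset vanish in \<open>auto simp: kernel_def\<close>)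
  moreover obtain l r where "l \<in> left_tens I G" "r \<in> right_tens G I" "n = l \<otimes>\<^bsub>T\<^esub> r"
    using assms unfolding set_mult_def by blast
  ultimately have "n \<in> kernel T (tensor_sq Q) tensor_proj"
    using subgroup.m_closed[OF proj_hom.subgroup_kernel] by blast
  then show ?thesis by (simp add: kernel_def)
qed

lemma tensor_proj_image: "tensor_proj ` carrier T = carrier (tensor_sq Q)"
proof -
  have "tensor_proj ` tensors G = tensors Q"
  proof
    show "tensor_proj ` tensors G \<subseteq> tensors Q"
      by (fastforce simp: tensors_def proj.tens_lift_tens MLA_Mod_carrier intro: rcosetsI[OF I_subset])
    show "tensors Q \<subseteq> tensor_proj ` tensors G"
    proof
      fix u assume "u \<in> tensors Q"
      then obtain x y where "x \<in> carrier G" "y \<in> carrier G" "u = tens Q (I #> x) (I #> y)"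
        unfolding tensors_def by (auto simp: MLA_Mod_carrier RCOSETS_def)
      then show "u \<in> tensor_proj ` tensors G"
        by (intro image_eqI[where x = "tens G x y"]) (auto simp: tensors_def proj.tens_lift_tens)
    qed
  qed
  then show ?thesis
    using proj_hom.generate_img[OF tensors_subset_carrier]
    by (simp add: carrier_tensor_sq_generate Q.carrier_tensor_sq_generate)
qed

lemma tensor_iso_proj:
  assumes "c \<in> carrier T"
  shows "tensor_iso (tensor_proj c) = N #>\<^bsub>T\<^esub> c"
proof -
  have "(tensor_iso \<circ> tensor_proj) c = N #>\<^bsub>T\<^esub> c"
  proof (rule T.hom_eq_on_generate[OF Group.hom_compose[OF tensor_proj_hom tensor_iso_hom]
        T.rcos_hom_MLA_Mod[OF N_normal] T.group_MLA_Mod[OF N_normal] tensors_subset_carrier])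
    show "c \<in> generate T (tensors G)" using assms carrier_tensor_sq_generate by simp
  qed (auto simp: tensors_def proj.tens_lift_tens iso.tens_lift_tens Q_rcos_simps tens_coset_rcos)
  then show ?thesis by simp
qed

lemma tensor_iso_bij: "bij_betw tensor_iso (carrier (tensor_sq Q)) (carrier (MLA_Mod T N))"
proof (rule bij_betw_imageI)
  show "inj_on tensor_iso (carrier (tensor_sq Q))"
  proof (rule inj_onI)
    fix u v assume "u \<in> carrier (tensor_sq Q)" "v \<in> carrier (tensor_sq Q)"
      and eq: "tensor_iso u = tensor_iso v"
    then have "u \<in> tensor_proj ` carrier T" "v \<in> tensor_proj ` carrier T"
      by (simp_all add: tensor_proj_image)
    then obtain c d where c: "c \<in> carrier T" "u = tensor_proj c" and d: "d \<in> carrier T" "v = tensor_proj d"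
      by blast
    have "N #>\<^bsub>T\<^esub> c = N #>\<^bsub>T\<^esub> d"
      using eq c d by (simp add: tensor_iso_proj)
    then have "c \<otimes>\<^bsub>T\<^esub> inv\<^bsub>T\<^esub> d \<in> N"
      using T.rcos_self[OF c(1) N_subgroup] subgroup.rcos_module_imp[OF N_subgroup T.is_group d(1)]
      by simp
    then have "tensor_proj (c \<otimes>\<^bsub>T\<^esub> inv\<^bsub>T\<^esub> d) = \<one>\<^bsub>tensor_sq Q\<^esub>"
      by (rule tensor_proj_N)
    then have "tensor_proj c \<otimes>\<^bsub>tensor_sq Q\<^esub> inv\<^bsub>tensor_sq Q\<^esub> tensor_proj d = \<one>\<^bsub>tensor_sq Q\<^esub>"
      using c d by simp
    then show "u = v"
      using c d by (simp add: group.inv_solve_right'[OF group_tensor_sq])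
  qed
  have "carrier (MLA_Mod T N) = (\<lambda>c. tensor_iso (tensor_proj c)) ` carrier T"
    by (auto simp: MLA_Mod_carrier RCOSETS_def tensor_iso_proj)
  then show "tensor_iso ` carrier (tensor_sq Q) = carrier (MLA_Mod T N)"
    by (simp add: tensor_proj_image[symmetric] image_image)
qed

end

theorem lemma3p2:
  fixes G :: "('a, 'b) mla_scheme" and I :: "'a set"
  assumes "mult_lie_alg G" and "mla_ideal I G"
  shows "mla_ideal (left_tens I G <#>\<^bsub>tensor_sq G\<^esub> right_tens G I) (tensor_sq G)
    \<and> mla_is_iso (tensor_sq (MLA_Mod G I))
         (MLA_Mod (tensor_sq G) (left_tens I G <#>\<^bsub>tensor_sq G\<^esub> right_tens G I))"
proof -
  interpret mla_with_ideal G I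
    using assms by (simp add: mla_with_ideal_def mla_with_ideal_axioms_def mult_lie_alg_iff_mla)
  have "tensor_iso \<in> mla_iso (tensor_sq Q) (MLA_Mod T N)"
    using iso.tens_lift_mla_hom tensor_iso_bij by (simp add: mla_iso_def)
  then show ?thesis
    using N_ideal by (auto simp: mla_is_iso_def)
qed

end
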